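(* Let $p,n$ be positive integers with $c=\gcd(p,n)$ prime, and $y\in\mathbb{Z}_n$. Let $\varphi_i,\varphi_j\in\operatorname{End}((\mathbb{Z}_n,y,y))$ (where $\varphi_m$ denotes the pointed endomorphism with $\varphi_m(y+1)=m$) and let $\alpha\in\hom(P(\widetilde{\mathcal{T}(p,2)}),(\mathbb{Z}_n,y,y))$ be a nontrivial (non-constant) coloring. Then $\varphi_i\circ\alpha=\varphi_j\circ\alpha$ if and only if $i\equiv j\pmod c$.
   Context: $\mathbb{Z}_n$ is the dihedral quandle ($x\triangleright y=2y-x$ mod $n$) and $(\mathbb{Z}_n,y,y)$ the $2$-pointed quandle with both basepoints $y$; pointed endomorphisms are quandle endomorphisms fixing $y$, and each is determined by its value at $y+1$. $P(\widetilde{\mathcal{T}(p,2)})=(Q,x_1,x_{p+1})$ with $Q=\langle x_1,\dots,x_{p+1}\mid x_p=x_2\triangleright x_{p+1},\ x_i=x_{i+2}\triangleright x_{i+1}\ (1\le i\le p-1)\rangle$, the fundamental pointed quandle of the $1$-linkoid of $(p,2)$-torus type; $\hom$ denotes basepoint-preserving homomorphisms. Since $c\mid n$, the congruence $i\equiv j \pmod c$ is well defined for $i,j\in\mathbb{Z}_n$. *)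

theory Defs
  imports "HOL-Number_Theory.Number_Theory"
begin

text \<open>The dihedral quandle Z_n, carrier {0..<n} (as integers), x |> z = 2z - x mod n.\<close>
definition dih :: "int \<Rightarrow> int \<Rightarrow> int \<Rightarrow> int" where
  "dih n x z = (2 * z - x) mod n"

definition pointed_end :: "int \<Rightarrow> int \<Rightarrow> (int \<Rightarrow> int) \<Rightarrow> bool" where
  "pointed_end n y f \<longleftrightarrow>
     (\<forall>x\<in>{0..<n}. f x \<in> {0..<n}) \<and>
     (\<forall>x\<in>{0..<n}. \<forall>z\<in>{0..<n}. f (dih n x z) = dih n (f x) (f z)) \<and>
     f y = y"

text \<open>Basepoint-preserving homomorphisms P(T(p,2)~) -> (Z_n,y,y), described (via the
  universal property of the presentation) by the images a 1, ..., a (p+1) of the generators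
  x_1, ..., x_(p+1), which must satisfy the defining relations and send both basepoints
  x_1, x_(p+1) to y.\<close>
definition torus_coloring :: "nat \<Rightarrow> int \<Rightarrow> int \<Rightarrow> (nat \<Rightarrow> int) \<Rightarrow> bool" where
  "torus_coloring p n y a \<longleftrightarrow>
     (\<forall>k\<in>{1..p+1}. a k \<in> {0..<n}) \<and>
     a p = dih n (a 2) (a (p+1)) \<and>
     (\<forall>i\<in>{1..p-1}. a i = dih n (a (i+2)) (a (i+1))) \<and>
     a 1 = y \<and> a (p+1) = y"

definition nontrivial_coloring :: "nat \<Rightarrow> (nat \<Rightarrow> int) \<Rightarrow> bool" where
  "nontrivial_coloring p a \<longleftrightarrow> (\<exists>k\<in>{1..p+1}. \<exists>l\<in>{1..p+1}. a k \<noteq> a l)"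

end

theory Submission
  imports Defs
begin

text \<open>A pointed endomorphism of \<open>(\<int>\<^sub>n, y, y)\<close> is the affine map
  \<open>y + t \<mapsto> y + t (i - y)\<close>, because \<open>y + t + 2 = (y + t) \<triangleright> (y + t + 1)\<close>.
  For the same reason the relations \<open>x_i = x_(i+2) \<triangleright> x_(i+1)\<close> make a coloring an
  arithmetic progression \<open>a_k = y + (k - 1) d\<close>; the basepoint condition on \<open>x_(p+1)\<close>
  gives \<open>n dvd p d\<close>, and nontriviality says that \<open>n\<close> does not divide \<open>d\<close>. Hence
  \<open>\<phi>\<^sub>i \<circ> \<alpha> = \<phi>\<^sub>j \<circ> \<alpha>\<close> iff \<open>n dvd d (i - j)\<close>, i.e. iff \<open>n / gcd d n\<close> divides \<open>i - j\<close>;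
  that number divides \<open>c = gcd p n\<close> and is not \<open>1\<close>, so it is \<open>c\<close> as \<open>c\<close> is prime.\<close>

lemma dih_mod_mod [simp]: "dih n (x mod n) (z mod n) = dih n x z"
  unfolding dih_def by (intro mod_diff_cong mod_mult_cong) simp_all

lemma dih_dih: "dih n (dih n x z) z = x mod n"
  by (simp add: dih_def mod_simps)

lemma dih_recurrence_arith_progression:
  fixes u :: "nat \<Rightarrow> int"
  assumes step: "\<And>s. s + 2 \<le> N \<Longrightarrow> u (s + 2) = dih n (u s) (u (s + 1))"
    and "u 0 = b mod n" and "u 1 = (b + d) mod n" and "t \<le> N"
  shows "u t = (b + int t * d) mod n"
  using \<open>t \<le> N\<close>
proof (induction t rule: less_induct)
  case (less t)
  consider "t = 0" | "t = 1" | s where "t = s + 2"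
    by (metis One_nat_def add_2_eq_Suc' not0_implies_Suc)
  then show ?case
  proof cases
    case 3
    then have "u t = dih n ((b + int s * d) mod n) ((b + int (s + 1) * d) mod n)"
      using step less by simp
    also have "\<dots> = dih n (b + int s * d) (b + int (s + 1) * d)"
      by (rule dih_mod_mod)
    also have "\<dots> = (b + int t * d) mod n"
      using 3 by (simp add: dih_def algebra_simps)
    finally show ?thesis .
  qed (use assms in auto)
qed

lemma pointed_end_affine:
  assumes "n > 0" and "y \<in> {0..<n}" and "pointed_end n y f"
  shows "f (x mod n) = (y + (x - y) * (f ((y + 1) mod n) - y)) mod n"
proof -
  define d where "d = f ((y + 1) mod n) - y"
  have closed: "f z \<in> {0..<n}" if "z \<in> {0..<n}" for z
    using assms(3) that by (simp add: pointed_end_def)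
  have hom: "f (dih n z w) = dih n (f z) (f w)" if "z \<in> {0..<n}" "w \<in> {0..<n}" for z w
    using assms(3) that by (simp add: pointed_end_def)
  have on_orbit: "f ((y + int t) mod n) = (y + int t * d) mod n" for t
  proof (rule dih_recurrence_arith_progression[where u = "\<lambda>t. f ((y + int t) mod n)" and N = t])
    fix s
    have "f ((y + int (s + 2)) mod n) = f (dih n ((y + int s) mod n) ((y + int (s + 1)) mod n))"
      unfolding dih_mod_mod by (simp add: dih_def algebra_simps)
    also have "\<dots> = dih n (f ((y + int s) mod n)) (f ((y + int (s + 1)) mod n))"
      using assms(1) by (intro hom) simp_all
    finally show "f ((y + int (s + 2)) mod n)
        = dih n (f ((y + int s) mod n)) (f ((y + int (s + 1)) mod n))" .
  next
    show "f ((y + int 0) mod n) = y mod n"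
      using assms(2,3) by (simp add: pointed_end_def)
    show "f ((y + int 1) mod n) = (y + d) mod n"
      using closed[of "(y + 1) mod n"] assms(1) by (simp add: d_def)
  qed simp
  have "f (x mod n) = f ((y + int (nat ((x - y) mod n))) mod n)"
    using assms(1) by (simp add: mod_simps)
  also have "\<dots> = (y + (x - y) mod n * d) mod n"
    using on_orbit[of "nat ((x - y) mod n)"] assms(1) by simp
  also have "\<dots> = (y + (x - y) * d) mod n"
    by (metis mod_add_right_eq mod_mult_left_eq)
  finally show ?thesis by (simp add: d_def)
qed

lemma pointed_ends_agree_iff:
  assumes "n > 0" and "y \<in> {0..<n}" and "pointed_end n y f" and "pointed_end n y g"
  shows "f (x mod n) = g (x mod n)
    \<longleftrightarrow> n dvd (x - y) * (f ((y + 1) mod n) - g ((y + 1) mod n))"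
  using pointed_end_affine[OF assms(1-3), of x] pointed_end_affine[OF assms(1,2,4), of x]
  by (simp add: mod_eq_dvd_iff algebra_simps)

lemma torus_coloring_arith_progression:
  assumes "p > 0" and "torus_coloring p n y a" and "k \<in> {1..p+1}"
  shows "a k = (y + int (k - 1) * (a 2 - y)) mod n"
proof -
  have closed: "\<And>k. k \<in> {1..p+1} \<Longrightarrow> a k \<in> {0..<n}"
    and rel: "\<And>i. i \<in> {1..p-1} \<Longrightarrow> a i = dih n (a (i + 2)) (a (i + 1))"
    and "a 1 = y"
    using assms(2) unfolding torus_coloring_def by auto
  have "a (t + 1) = (y + int t * (a 2 - y)) mod n" if "t \<le> p" for t
  proof (rule dih_recurrence_arith_progression[where u = "\<lambda>t. a (t + 1)" and N = p])
    fix s assume "s + 2 \<le> p"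
    then have "a (s + 3) = dih n (dih n (a (s + 3)) (a (s + 2))) (a (s + 2))"
      using closed[of "s + 3"] by (simp add: dih_dih)
    also have "dih n (a (s + 3)) (a (s + 2)) = a (s + 1)"
      using rel[of "s + 1"] \<open>s + 2 \<le> p\<close> by (simp add: numeral_3_eq_3)
    finally show "a (s + 2 + 1) = dih n (a (s + 1)) (a (s + 1 + 1))"
      by (simp add: numeral_3_eq_3)
  next
    show "a (0 + 1) = y mod n"
      using closed[of 1] \<open>a 1 = y\<close> by simp
    show "a (1 + 1) = (y + (a 2 - y)) mod n"
      using closed[of 2] assms(1) by (simp add: numeral_2_eq_2)
  qed (use that in simp)
  moreover have "k - 1 \<le> p" and "k - 1 + 1 = k"
    using assms(3) by auto
  ultimately show ?thesis by metis
qed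

lemma dvd_mult_iff_prime_gcd_dvd:
  fixes n p d e :: int
  assumes "n dvd p * d" and "\<not> n dvd d" and "prime (gcd p n)"
  shows "n dvd d * e \<longleftrightarrow> gcd p n dvd e"
proof -
  define g where "g = gcd d n"
  have "g \<noteq> 0"
    using assms(2) by (auto simp: g_def)
  then obtain d' n' where d: "d = d' * g" and n: "n = n' * g" and "coprime d' n'"
    using gcd_coprime_exists[of d n] unfolding g_def by blast
  have "n' dvd p * d'"
    using assms(1) \<open>g \<noteq> 0\<close> unfolding d n by (simp add: mult.assoc)
  with \<open>coprime d' n'\<close> have "n' dvd gcd p n"
    unfolding n by (simp add: coprime_commute coprime_dvd_mult_left_iff)
  moreover have "\<not> is_unit n'"
    using assms(2) unfolding d n by (meson dvd_refl mult_dvd_mono unit_imp_dvd)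
  ultimately have "\<bar>n'\<bar> = gcd p n"
    using assms(3) by (metis prime_int_iff abs_dvd_iff abs_ge_zero zdvd1_eq)
  have "n dvd d * e \<longleftrightarrow> n' dvd d' * e"
    using \<open>g \<noteq> 0\<close> unfolding d n by (simp add: mult.commute mult.left_commute)
  also have "\<dots> \<longleftrightarrow> n' dvd e"
    using \<open>coprime d' n'\<close> by (simp add: coprime_commute coprime_dvd_mult_right_iff)
  also have "\<dots> \<longleftrightarrow> gcd p n dvd e"
    using \<open>\<bar>n'\<bar> = gcd p n\<close> by (metis abs_dvd_iff)
  finally show ?thesis .
qed

theorem lemma6p14:
  fixes p :: nat and n y i j :: int and f g :: "int \<Rightarrow> int" and a :: "nat \<Rightarrow> int"
  assumes "p > 0" and "n > 0"
    and "prime (gcd (int p) n)"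
    and "y \<in> {0..<n}"
    and "pointed_end n y f" and "f ((y + 1) mod n) = i"
    and "pointed_end n y g" and "g ((y + 1) mod n) = j"
    and "torus_coloring p n y a" and "nontrivial_coloring p a"
  shows "(\<forall>k\<in>{1..p+1}. f (a k) = g (a k)) \<longleftrightarrow> [i = j] (mod (gcd (int p) n))"
proof -
  define d where "d = a 2 - y"
  have a_eq: "a k = (y + int (k - 1) * d) mod n" if "k \<in> {1..p+1}" for k
    using torus_coloring_arith_progression[OF assms(1,9) that] by (simp add: d_def)
  have "n dvd int p * d"
  proof -
    have "(y + int p * d) mod n = y mod n"
      using a_eq[of "p + 1"] assms(4,9) by (simp add: torus_coloring_def)
    then show ?thesis
      by (simp only: mod_eq_dvd_iff) simp
  qed
  moreover have "\<not> n dvd d"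
  proof
    assume "n dvd d"
    then have "a k = y" if "k \<in> {1..p+1}" for k
      using a_eq[OF that] assms(4) by (simp add: mod_add_right_eq[symmetric])
    then show False
      using assms(10) by (auto simp: nontrivial_coloring_def)
  qed
  moreover have "f (a k) = g (a k) \<longleftrightarrow> n dvd int (k - 1) * (d * (i - j))"
    if "k \<in> {1..p+1}" for k
    using a_eq[OF that] pointed_ends_agree_iff[OF assms(2,4,5,7), of "y + int (k - 1) * d"]
      assms(6,8) by (simp add: ac_simps)
  then have "(\<forall>k\<in>{1..p+1}. f (a k) = g (a k)) \<longleftrightarrow> n dvd d * (i - j)"
    using assms(1) by (fastforce dest: bspec[of _ _ 2])
  ultimately show ?thesis
    using assms(3) by (simp add: dvd_mult_iff_prime_gcd_dvd cong_iff_dvd_diff)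
qed

end
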